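(* Let $R_{n,d}$ be a $d$-regular simple graph on $n$ vertices. Then $m(R_{n,d})=\frac{n}{d+1}$.
   Context: For a simple graph $G$ with adjacency matrix $A$, $\mathrm{SOL}(G)$ is the set of $x\in\mathbb{R}^n$ with $x\geq 0$, $(A+I)x\geq\mathbf{e}$ and $x^\top((A+I)x-\mathbf{e})=0$ ($I$ identity, $\mathbf{e}$ all-ones), and $m(G):=\min\{\mathbf{e}^\top x\mid x\in\mathrm{SOL}(G)\}$. *)

theory Defs
  imports Complex_Main
begin

definition simple_graph :: "'a set \<Rightarrow> ('a \<Rightarrow> 'a \<Rightarrow> bool) \<Rightarrow> bool" where
  "simple_graph V E \<longleftrightarrow> finite V \<and> (\<forall>u v. E u v \<longrightarrow> u \<in> V \<and> v \<in> V)
     \<and> (\<forall>u v. E u v \<longrightarrow> E v u) \<and> (\<forall>v. \<not> E v v)"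

definition regular :: "'a set \<Rightarrow> ('a \<Rightarrow> 'a \<Rightarrow> bool) \<Rightarrow> nat \<Rightarrow> bool" where
  "regular V E d \<longleftrightarrow> (\<forall>v\<in>V. card {u\<in>V. E v u} = d)"

definition adj :: "('a \<Rightarrow> 'a \<Rightarrow> bool) \<Rightarrow> 'a \<Rightarrow> 'a \<Rightarrow> real" where
  "adj E u v = (if E u v then 1 else 0)"

definition AIx :: "'a set \<Rightarrow> ('a \<Rightarrow> 'a \<Rightarrow> bool) \<Rightarrow> ('a \<Rightarrow> real) \<Rightarrow> 'a \<Rightarrow> real" where
  "AIx V E x v = (\<Sum>u\<in>V. (adj E v u + (if u = v then 1 else 0)) * x u)"

text \<open>Vectors in R^V are functions vanishing outside V.\<close>
definition SOL :: "'a set \<Rightarrow> ('a \<Rightarrow> 'a \<Rightarrow> bool) \<Rightarrow> ('a \<Rightarrow> real) set" where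
  "SOL V E = {x. (\<forall>v. v \<notin> V \<longrightarrow> x v = 0)
               \<and> (\<forall>v\<in>V. x v \<ge> 0)
               \<and> (\<forall>v\<in>V. AIx V E x v \<ge> 1)
               \<and> (\<Sum>v\<in>V. x v * (AIx V E x v - 1)) = 0}"

definition mG :: "'a set \<Rightarrow> ('a \<Rightarrow> 'a \<Rightarrow> bool) \<Rightarrow> real" where
  "mG V E = (LEAST s. s \<in> (\<lambda>x. \<Sum>v\<in>V. x v) ` SOL V E)"

end

theory Submission
  imports Defs
begin

text \<open>Summing the inequalities \<open>((A + I) x)\<^sub>v \<ge> 1\<close> over all vertices, and using that every
  column of \<open>A + I\<close> sums to \<open>d + 1\<close>, gives \<open>(d + 1) e\<^sup>T x \<ge> n\<close> for every feasible \<open>x\<close>. The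
  constant vector \<open>x = e / (d + 1)\<close> satisfies \<open>(A + I) x = e\<close>, so it lies in \<open>SOL\<close> with
  complementarity trivially satisfied and attains this bound.\<close>

lemma adj_sym:
  assumes "simple_graph V E"
  shows "adj E u v = adj E v u"
  using assms by (auto simp: simple_graph_def adj_def)

lemma sum_adj_regular:
  assumes "simple_graph V E" and "regular V E d" and "v \<in> V"
  shows "(\<Sum>u\<in>V. adj E v u) = real d"
proof -
  have "finite V" using assms(1) by (simp add: simple_graph_def)
  then have "(\<Sum>u\<in>V. adj E v u) = real (card {u\<in>V. E v u})"
    by (simp add: adj_def sum.inter_filter[symmetric])
  also have "\<dots> = real d" using assms(2,3) by (simp add: regular_def)
  finally show ?thesis .
qed

lemma sum_adj_plus_id_regular:
  assumes "simple_graph V E" and "regular V E d" and "v \<in> V"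
  shows "(\<Sum>u\<in>V. adj E v u + (if u = v then 1 else 0)) = real d + 1"
proof -
  have "finite V" using assms(1) by (simp add: simple_graph_def)
  with assms show ?thesis
    by (simp add: sum.distrib sum_adj_regular)
qed

lemma AIx_const_regular:
  assumes "simple_graph V E" and "regular V E d" and "v \<in> V"
    and "\<And>u. u \<in> V \<Longrightarrow> x u = c"
  shows "AIx V E x v = (real d + 1) * c"
proof -
  have "AIx V E x v = (\<Sum>u\<in>V. adj E v u + (if u = v then 1 else 0)) * c"
    unfolding AIx_def by (simp add: assms(4) sum_distrib_right)
  then show ?thesis using sum_adj_plus_id_regular[OF assms(1-3)] by simp
qed

lemma sum_AIx_regular:
  assumes "simple_graph V E" and "regular V E d"
  shows "(\<Sum>v\<in>V. AIx V E x v) = (real d + 1) * (\<Sum>u\<in>V. x u)"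
proof -
  have "(\<Sum>v\<in>V. AIx V E x v) = (\<Sum>u\<in>V. (\<Sum>v\<in>V. adj E v u + (if u = v then 1 else 0)) * x u)"
    unfolding AIx_def by (subst sum.swap) (simp add: sum_distrib_right)
  also have "\<dots> = (\<Sum>u\<in>V. (real d + 1) * x u)"
    using sum_adj_plus_id_regular[OF assms] adj_sym[OF assms(1)]
    by (intro sum.cong) (auto simp: eq_commute[of _ u for u])
  finally show ?thesis by (simp add: sum_distrib_left)
qed

lemma card_le_sum_SOL_regular:
  assumes "simple_graph V E" and "regular V E d" and "x \<in> SOL V E"
  shows "real (card V) / (real d + 1) \<le> (\<Sum>v\<in>V. x v)"
proof -
  have "real (card V) = (\<Sum>v\<in>V. 1)" by simp
  also have "\<dots> \<le> (\<Sum>v\<in>V. AIx V E x v)"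
    using assms(3) by (intro sum_mono) (auto simp: SOL_def)
  also have "\<dots> = (real d + 1) * (\<Sum>v\<in>V. x v)" by (rule sum_AIx_regular[OF assms(1,2)])
  finally show ?thesis by (simp add: divide_le_eq mult.commute)
qed

lemma const_in_SOL_regular:
  assumes "simple_graph V E" and "regular V E d"
  shows "(\<lambda>v. if v \<in> V then 1 / (real d + 1) else 0) \<in> SOL V E"
proof -
  let ?x = "\<lambda>v. if v \<in> V then 1 / (real d + 1) else 0"
  have "AIx V E ?x v = 1" if "v \<in> V" for v
    using AIx_const_regular[OF assms that, of ?x "1 / (real d + 1)"] by simp
  then show ?thesis by (simp add: SOL_def)
qed

theorem lemma5:
  fixes V :: "'a set" and E :: "'a \<Rightarrow> 'a \<Rightarrow> bool" and n d :: nat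
  assumes "simple_graph V E" and "card V = n" and "regular V E d"
  shows "mG V E = real n / (real d + 1)"
proof -
  let ?x = "\<lambda>v. if v \<in> V then 1 / (real d + 1) else 0"
  have "?x \<in> SOL V E" by (rule const_in_SOL_regular[OF assms(1,3)])
  moreover have "(\<Sum>v\<in>V. ?x v) = real n / (real d + 1)" using assms(2) by simp
  moreover have "real n / (real d + 1) \<le> (\<Sum>v\<in>V. x v)" if "x \<in> SOL V E" for x
    using card_le_sum_SOL_regular[OF assms(1,3) that] assms(2) by simp
  ultimately show ?thesis
    unfolding mG_def by (intro Least_equality) (auto intro: image_eqI[where x = ?x])
qed

end
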